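(* Let $a,b\in(0,\infty)^d$, let $\varphi\in\mathcal{O}_a^b(\mathbb{C}^d)$, and let $$c = \left(2b_1,\dots,2b_d,\frac{2\pi^2}{a_1},\dots,\frac{2\pi^2}{a_d}\right)\in(0,\infty)^{2d}.$$ Then for every $f\in L^2(\mathbb{R}^d)$, the function $(x,\omega)\mapsto|V_\varphi f(x,\omega)|^2$ on $\mathbb{R}^{2d}$ extends to an entire function on $\mathbb{C}^{2d}$ belonging to $\mathcal{O}^c(\mathbb{C}^{2d})$.
   Context: For $a,b\in(0,\infty)^d$, $\mathcal{O}_a^b(\mathbb{C}^d)$ is the set of entire functions $F$ on $\mathbb{C}^d$ for which there is $C>0$ with $|F(x+iy)| \le C\prod_{j=1}^d e^{-a_j x_j^2}e^{b_j y_j^2}$ for all $x,y\in\mathbb{R}^d$; $\varphi$ is regarded as a window on $\mathbb{R}^d$ via restriction. For $c\in(0,\infty)^{n}$, $\mathcal{O}^c(\mathbb{C}^{n})$ is the set of entire functions $F$ on $\mathbb{C}^n$ with $|F(z)|\le C\prod_{j=1}^{n} e^{c_j|z_j|^2}$ for some $C>0$ and all $z\in\mathbb{C}^n$. The short-time Fourier transform is $V_g f(x,\omega) = \int_{\mathbb{R}^d} f(t)\overline{g(t-x)} e^{-2\pi i \omega\cdot t}\,dt$. *)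

theory Defs
  imports "HOL-Analysis.Analysis"
begin

text \<open>Entire (holomorphic) functions on C^n, with C^n rendered as complex^'n:
  complex (Frechet) differentiable everywhere with a complex-linear derivative.\<close>
definition entire_vec :: "(complex ^ 'n \<Rightarrow> complex) \<Rightarrow> bool" where
  "entire_vec F \<longleftrightarrow>
     (\<forall>z. \<exists>L. (F has_derivative L) (at z) \<and>
              (\<forall>c v. L (\<chi> k. c * v $ k) = c * L v))"

definition cplx_pt :: "real ^ 'd \<Rightarrow> real ^ 'd \<Rightarrow> complex ^ 'd" where
  "cplx_pt x y = (\<chi> j. Complex (x $ j) (y $ j))"

definition O_ab :: "real ^ 'd \<Rightarrow> real ^ 'd \<Rightarrow> (complex ^ 'd \<Rightarrow> complex) set" where
  "O_ab a b = {F. entire_vec F \<and>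
     (\<exists>C>0. \<forall>x y. norm (F (cplx_pt x y))
        \<le> C * (\<Prod>j\<in>UNIV. exp (- a $ j * (x $ j)\<^sup>2) * exp (b $ j * (y $ j)\<^sup>2)))}"

definition O_c :: "real ^ 'n \<Rightarrow> (complex ^ 'n \<Rightarrow> complex) set" where
  "O_c c = {F. entire_vec F \<and>
     (\<exists>C>0. \<forall>z. norm (F z) \<le> C * (\<Prod>j\<in>UNIV. exp (c $ j * (norm (z $ j))\<^sup>2)))}"

definition restr_R :: "(complex ^ 'd \<Rightarrow> complex) \<Rightarrow> real ^ 'd \<Rightarrow> complex" where
  "restr_R F t = F (\<chi> j. complex_of_real (t $ j))"

definition L2 :: "(real ^ 'd \<Rightarrow> complex) set" where
  "L2 = {f. f \<in> borel_measurable lebesgue \<and> integrable lebesgue (\<lambda>t. (norm (f t))\<^sup>2)}"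

definition stft :: "(real ^ 'd \<Rightarrow> complex) \<Rightarrow> (real ^ 'd \<Rightarrow> complex) \<Rightarrow> real ^ 'd \<Rightarrow> real ^ 'd \<Rightarrow> complex" where
  "stft g f x \<omega> = integral\<^sup>L lebesgue
     (\<lambda>t. f t * cnj (g (t - x)) * cis (- 2 * pi * (\<omega> \<bullet> t)))"

text \<open>Point of C^{2d} = C^('d + 'd) with real coordinates (x, omega).\<close>
definition pair_pt :: "real ^ 'd \<Rightarrow> real ^ 'd \<Rightarrow> complex ^ ('d + 'd)" where
  "pair_pt x \<omega> = (\<chi> k. case k of Inl j \<Rightarrow> complex_of_real (x $ j)
                                | Inr j \<Rightarrow> complex_of_real (\<omega> $ j))"

end

theory Submission
  imports Defs "HOL-Complex_Analysis.Cauchy_Integral_Formula" "HOL-Probability.Distributions"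
begin

text \<open>
  Write |V f|^2 = V f * cnj (V f). With the Schwarz reflection \<phi>*(u) = cnj (\<phi> (cnj u)) of the window,
  both factors are restrictions to R^2d of parameter integrals

    E(z, \<zeta>) = \<integral> g(t) \<Phi>(t - z) exp(2\<pi>i\<sigma> \<zeta>\<cdot>t) dt,

  taking (\<Phi>, g, \<sigma>) = (\<phi>*, f, -1) and (\<phi>, cnj f, 1). The Gaussian decay of \<Phi> in the real
  directions dominates the integrand locally uniformly by |g| times a Gaussian, which is integrable
  since g is square integrable; hence E is entire. Cauchy-Schwarz and an explicit Gaussian integral bound
  |E(z, \<zeta>)| by a constant times the exponential of
  \<Sum>_j b_j (Im z_j)^2 + \<pi>^2 \<sigma>^2 (Im \<zeta>_j)^2 / a_j - 2\<pi>\<sigma> Im \<zeta>_j Re z_j.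
  In the product of the bounds for \<sigma> = -1 and \<sigma> = 1 the cross terms cancel, and what remains is at
  most \<Sum>_k c_k |Z_k|^2.
\<close>

section \<open>Entire functions on C^n\<close>

lemma entire_vecI:
  assumes "\<And>z. (F has_derivative L z) (at z)"
    and "\<And>z c v. L z (\<chi> k. c * v $ k) = c * L z v"
  shows "entire_vec F"
  unfolding entire_vec_def using assms by blast

lemma entire_vecE:
  assumes "entire_vec F"
  obtains L where "\<And>z. (F has_derivative L z) (at z)"
    and "\<And>z c v. L z (\<chi> k. c * v $ k) = c * L z v"
proof -
  from assms have "\<forall>z. \<exists>L. (F has_derivative L) (at z) \<and> (\<forall>c v. L (\<chi> k. c * v $ k) = c * L v)"
    unfolding entire_vec_def by blast
  then obtain L where "\<forall>z. (F has_derivative L z) (at z) \<and> (\<forall>c v. L z (\<chi> k. c * v $ k) = c * L z v)"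
    by metis
  then show ?thesis using that by blast
qed

lemma entire_vec_const: "entire_vec (\<lambda>z. c)"
  by (rule entire_vecI[where L="\<lambda>z v. 0"]) auto

lemma entire_vec_mult:
  assumes "entire_vec F" "entire_vec G"
  shows "entire_vec (\<lambda>z. F z * G z)"
proof -
  obtain LF where LF: "\<And>z. (F has_derivative LF z) (at z)" "\<And>z c v. LF z (\<chi> k. c * v $ k) = c * LF z v"
    using entire_vecE[OF assms(1)] by blast
  obtain LG where LG: "\<And>z. (G has_derivative LG z) (at z)" "\<And>z c v. LG z (\<chi> k. c * v $ k) = c * LG z v"
    using entire_vecE[OF assms(2)] by blast
  show ?thesis
    by (rule entire_vecI[OF has_derivative_mult[OF LF(1) LG(1)]]) (simp add: LF(2) LG(2) algebra_simps)
qed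

lemma entire_vec_holomorphic_comp:
  assumes h: "\<And>w. (h has_field_derivative h' w) (at w)" and "entire_vec F"
  shows "entire_vec (\<lambda>z. h (F z))"
proof -
  obtain L where L: "\<And>z. (F has_derivative L z) (at z)" "\<And>z c v. L z (\<chi> k. c * v $ k) = c * L z v"
    using entire_vecE[OF assms(2)] by blast
  show ?thesis
    by (rule entire_vecI[OF has_derivative_compose[OF L(1) h[unfolded has_field_derivative_def]]])
      (simp add: L(2))
qed

lemma entire_vec_bounded_linear:
  assumes "bounded_linear T" "\<And>c v. T (\<chi> k. c * v $ k) = c * T v"
  shows "entire_vec T"
  by (rule entire_vecI[where L="\<lambda>z. T"]) (auto intro: bounded_linear_imp_has_derivative assms)

lemma entire_vec_compose:
  assumes "entire_vec \<Phi>" and T: "\<And>z. (T has_derivative T' z) (at z)"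
    and T': "\<And>z c v. T' z (\<chi> k. c * v $ k) = (\<chi> k. c * (T' z v) $ k)"
  shows "entire_vec (\<lambda>z. \<Phi> (T z))"
proof -
  obtain L where L: "\<And>z. (\<Phi> has_derivative L z) (at z)" "\<And>z c v. L z (\<chi> k. c * v $ k) = c * L z v"
    using entire_vecE[OF assms(1)] by blast
  show ?thesis
    by (rule entire_vecI[OF has_derivative_compose[OF T L(1)]]) (simp add: L(2) T')
qed

lemma entire_vec_continuous_on: "entire_vec F \<Longrightarrow> continuous_on S F"
  by (metis entire_vecE continuous_at_imp_continuous_on has_derivative_continuous)

lemma norm_vec_cmult: "norm (\<chi> k. c * (v::complex^'n) $ k) = norm c * norm v"
  unfolding norm_vec_def by (simp add: L2_set_right_distrib norm_mult)

lemma holomorphic_linear_Taylor_bound: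
  fixes g :: "complex \<Rightarrow> complex"
  assumes hol: "g holomorphic_on UNIV" and bd: "\<And>w. norm w \<le> 2 \<Longrightarrow> norm (g w) \<le> M"
    and s: "norm s \<le> 1"
  shows "norm (g s - g 0 - deriv g 0 * s) \<le> 2 * M * (norm s)\<^sup>2"
proof -
  let ?f = "\<lambda>i. (deriv ^^ i) g"
  have hd: "(?f i has_field_derivative ?f (Suc i) x) (at x within cball 0 1)" for i x
    using holomorphic_derivI[OF holomorphic_higher_deriv[OF hol open_UNIV] open_UNIV UNIV_I] by simp
  \<comment> \<open>Cauchy's estimate on the unit circle around a point of the unit disc bounds g''.\<close>
  have g2: "norm (?f 2 x) \<le> 2 * M" if "x \<in> cball 0 1" for x
  proof -
    have "norm ((deriv ^^ 2) g x) \<le> fact 2 * M / 1 ^ 2"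
    proof (rule Cauchy_inequality)
      show "g holomorphic_on ball x 1" using hol by (rule holomorphic_on_subset) auto
      show "continuous_on (cball x 1) g"
        using holomorphic_on_imp_continuous_on[OF hol] by (rule continuous_on_subset) auto
      fix w assume "norm (x - w) = 1"
      moreover have "norm w \<le> norm x + norm (x - w)" using norm_triangle_ineq4[of x "x - w"] by simp
      ultimately show "norm (g w) \<le> M" using that by (intro bd) auto
    qed simp
    then show ?thesis by simp
  qed
  have "norm (?f 0 s - (\<Sum>i\<le>1. ?f i 0 * (s - 0) ^ i / fact i)) \<le> 2 * M * norm (s - 0) ^ Suc 1 / fact 1"
    by (rule complex_Taylor[of "cball 0 1" 1 ?f]) (use hd g2 s in \<open>auto simp: numeral_2_eq_2\<close>)
  then show ?thesis by (simp add: power2_eq_square algebra_simps)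
qed

lemma entire_vec_remainder_bound:
  fixes \<psi> :: "complex^'n \<Rightarrow> complex"
  assumes ent: "entire_vec \<psi>" and LZ: "(\<psi> has_derivative L) (at Z)"
    and lin: "\<And>c v. L (\<chi> k. c * v $ k) = c * L v"
    and bd: "\<And>W. norm (W - Z) \<le> 2 \<Longrightarrow> norm (\<psi> W) \<le> M" and H: "norm H \<le> 1"
  shows "norm (\<psi> (Z + H) - \<psi> Z - L H) \<le> 2 * M * (norm H)\<^sup>2"
proof (cases "H = 0")
  case True
  then show ?thesis
    using bd[of Z] linear_0[OF has_derivative_linear[OF LZ]] by simp
next
  case False
  obtain L' where L': "\<And>z. (\<psi> has_derivative L' z) (at z)" "\<And>z c v. L' z (\<chi> k. c * v $ k) = c * L' z v"
    using entire_vecE[OF ent] by blast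
  \<comment> \<open>Restrict \<psi> to the complex line through Z in the direction of H.\<close>
  define h where "h = (\<chi> k. inverse (complex_of_real (norm H)) * H $ k)"
  define m where "m s = Z + (\<chi> k. s * h $ k)" for s
  define g where "g s = \<psi> (m s)" for s
  have nh: "norm h = 1" using False by (simp add: h_def norm_vec_cmult norm_inverse)
  have m_bl: "bounded_linear (\<lambda>s. \<chi> k. s * h $ k)"
    unfolding linear_conv_bounded_linear[symmetric]
    by (rule linearI) (auto simp: vec_eq_iff algebra_simps)
  have m_der: "(m has_derivative (\<lambda>ds. \<chi> k. ds * h $ k)) (at s)" for s
    unfolding m_def using has_derivative_add[OF has_derivative_const bounded_linear_imp_has_derivative[OF m_bl]]
    by simp
  have line_der: "(g has_field_derivative D h) (at s)"
    if "(\<psi> has_derivative D) (at (m s))" "\<And>c v. D (\<chi> k. c * v $ k) = c * D v" for D s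
  proof -
    have "(g has_derivative (\<lambda>ds. D (\<chi> k. ds * h $ k))) (at s)"
      unfolding g_def[abs_def] by (rule has_derivative_compose[OF m_der that(1)])
    moreover have "(\<lambda>ds. D (\<chi> k. ds * h $ k)) = (*) (D h)"
      by (auto simp: that(2) fun_eq_iff mult.commute)
    ultimately show ?thesis by (simp add: has_field_derivative_def)
  qed
  have m0: "m 0 = Z" by (simp add: m_def vec_eq_iff)
  have hol: "g holomorphic_on UNIV"
    using line_der[OF L'] by (metis field_differentiable_def field_differentiable_at_within holomorphic_on_def)
  have H_eq: "H = (\<chi> k. complex_of_real (norm H) * h $ k)"
    using False by (simp add: h_def vec_eq_iff)
  have "deriv g 0 = L h" using line_der[of L 0] LZ lin by (simp add: m0 DERIV_imp_deriv)
  then have "deriv g 0 * norm H = L H" by (metis H_eq lin mult.commute)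
  moreover have "g (norm H) = \<psi> (Z + H)" "g 0 = \<psi> Z"
    using m0 by (simp_all add: g_def m_def H_eq[symmetric])
  moreover have "norm (g w) \<le> M" if "norm w \<le> 2" for w
    unfolding g_def m_def using that by (intro bd) (simp add: norm_vec_cmult nh)
  ultimately show ?thesis
    using holomorphic_linear_Taylor_bound[OF hol, of M "norm H"] H by simp
qed

lemma entire_vec_derivative_bound:
  fixes \<psi> :: "complex^'n \<Rightarrow> complex"
  assumes ent: "entire_vec \<psi>" and LZ: "(\<psi> has_derivative L) (at Z)"
    and lin: "\<And>c v. L (\<chi> k. c * v $ k) = c * L v"
    and bd: "\<And>W. norm (W - Z) \<le> 2 \<Longrightarrow> norm (\<psi> W) \<le> M"
  shows "norm (L H) \<le> 4 * M * norm H"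
proof (cases "H = 0")
  case True
  then show ?thesis using linear_0[OF has_derivative_linear[OF LZ]] by simp
next
  case False
  define h where "h = H /\<^sub>R norm H"
  have nh: "norm h = 1" using False by (simp add: h_def)
  have "norm (\<psi> (Z + h) - \<psi> Z - L h) \<le> 2 * M"
    using entire_vec_remainder_bound[OF ent LZ lin bd, of h] nh by simp
  moreover have "norm (\<psi> (Z + h)) \<le> M" "norm (\<psi> Z) \<le> M"
    using bd[of "Z + h"] bd[of Z] nh by simp_all
  ultimately have "norm (L h) \<le> 4 * M"
    using norm_triangle_ineq4[of "\<psi> (Z + h) - \<psi> Z" "\<psi> (Z + h) - \<psi> Z - L h"]
      norm_triangle_ineq4[of "\<psi> (Z + h)" "\<psi> Z"] by simp
  moreover have "L H = norm H *\<^sub>R L h"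
    using False linear_scale[OF has_derivative_linear[OF LZ], of "norm H" h] by (simp add: h_def)
  ultimately show ?thesis
    by (simp add: mult.commute mult_left_mono)
qed

section \<open>Holomorphic parameter integrals\<close>

lemma LIMSEQ_difference_quotient:
  fixes f :: "'a::real_normed_vector \<Rightarrow> 'b::real_normed_vector"
  assumes der: "(f has_derivative L) (at z)"
  shows "(\<lambda>n. real (Suc n) *\<^sub>R (f (z + H /\<^sub>R real (Suc n)) - f z)) \<longlonglongrightarrow> L H"
proof (cases "H = 0")
  case True
  then show ?thesis using linear_0[OF has_derivative_linear[OF der]] by simp
next
  case False
  define y where "y n = z + H /\<^sub>R real (Suc n)" for n
  have "(\<lambda>n. H /\<^sub>R real (Suc n)) \<longlonglongrightarrow> 0"
    using tendsto_scaleR[OF LIMSEQ_inverse_real_of_nat tendsto_const, of H] by simp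
  from tendsto_add[OF tendsto_const[of z] this] have "y \<longlonglongrightarrow> z"
    unfolding y_def[abs_def] by simp
  moreover have "y n \<noteq> z" for n using False by (simp add: y_def)
  ultimately have "filterlim y (at z) sequentially"
    by (intro filterlim_atI) auto
  then have "(\<lambda>n. (f (y n) - f z - L (y n - z)) /\<^sub>R norm (y n - z)) \<longlonglongrightarrow> 0"
    using der unfolding has_derivative_at_within by (auto intro: filterlim_compose)
  then have "(\<lambda>n. norm H *\<^sub>R ((f (y n) - f z - L (y n - z)) /\<^sub>R norm (y n - z))) \<longlonglongrightarrow> 0"
    using tendsto_scaleR[OF tendsto_const] by fastforce
  moreover have "norm H *\<^sub>R ((f (y n) - f z - L (y n - z)) /\<^sub>R norm (y n - z))
      = real (Suc n) *\<^sub>R (f (y n) - f z) - L H" for n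
  proof -
    have ny: "norm H * inverse (norm (y n - z)) = real (Suc n)"
      using False by (simp add: y_def field_simps)
    have Ly: "L (y n - z) = L H /\<^sub>R real (Suc n)"
      using linear_scale[OF has_derivative_linear[OF der]] by (simp add: y_def)
    show ?thesis by (simp add: ny Ly scaleR_diff_right mult.assoc[symmetric])
  qed
  ultimately show ?thesis
    unfolding y_def by (simp add: LIM_zero_iff)
qed

lemma borel_measurable_derivative_param:
  fixes \<psi> :: "'t \<Rightarrow> 'a::real_normed_vector \<Rightarrow> 'b::{real_normed_vector, second_countable_topology}"
  assumes der: "\<And>t. t \<in> space M \<Longrightarrow> (\<psi> t has_derivative L t) (at z)"
    and meas: "\<And>W. (\<lambda>t. \<psi> t W) \<in> borel_measurable M"
  shows "(\<lambda>t. L t H) \<in> borel_measurable M"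
  by (rule borel_measurable_LIMSEQ_metric[OF _ LIMSEQ_difference_quotient[OF der]])
    (intro borel_measurable_scaleR borel_measurable_diff borel_measurable_const meas)

lemma bounded_linear_integral:
  fixes L :: "'t \<Rightarrow> 'a::real_normed_vector \<Rightarrow> 'b::{banach, second_countable_topology}"
  assumes lin: "\<And>t. linear (L t)" and int: "\<And>H. integrable M (\<lambda>t. L t H)"
    and K: "integrable M K" "\<And>t H. t \<in> space M \<Longrightarrow> norm (L t H) \<le> K t * norm H"
  shows "bounded_linear (\<lambda>H. \<integral>t. L t H \<partial>M)"
proof (rule bounded_linear_intro[where K="\<integral>t. K t \<partial>M"])
  fix x y show "(\<integral>t. L t (x + y) \<partial>M) = (\<integral>t. L t x \<partial>M) + (\<integral>t. L t y \<partial>M)"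
    by (simp add: linear_add[OF lin] int)
  fix r show "(\<integral>t. L t (r *\<^sub>R x) \<partial>M) = r *\<^sub>R (\<integral>t. L t x \<partial>M)"
    by (simp add: linear_scale[OF lin])
  have "norm (\<integral>t. L t x \<partial>M) \<le> (\<integral>t. norm (L t x) \<partial>M)"
    by (rule integral_norm_bound)
  also have "\<dots> \<le> (\<integral>t. K t * norm x \<partial>M)"
    using int K by (intro integral_mono) auto
  finally show "norm (\<integral>t. L t x \<partial>M) \<le> norm x * (\<integral>t. K t \<partial>M)"
    by (simp add: mult.commute)
qed

lemma has_derivative_integral_quadratic_remainder:
  fixes \<psi> :: "'t \<Rightarrow> 'a::real_normed_vector \<Rightarrow> 'b::{banach, second_countable_topology}"
  assumes bl: "bounded_linear (\<lambda>H. \<integral>t. L t H \<partial>M)"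
    and int_L: "\<And>H. integrable M (\<lambda>t. L t H)"
    and int_\<psi>: "\<And>W. norm (W - Z) \<le> 1 \<Longrightarrow> integrable M (\<lambda>t. \<psi> t W)"
    and G: "integrable M G"
    and rem: "\<And>t H. t \<in> space M \<Longrightarrow> norm H \<le> 1 \<Longrightarrow> norm (\<psi> t (Z + H) - \<psi> t Z - L t H) \<le> G t * (norm H)\<^sup>2"
  shows "((\<lambda>W. \<integral>t. \<psi> t W \<partial>M) has_derivative (\<lambda>H. \<integral>t. L t H \<partial>M)) (at Z)"
  unfolding has_derivative_at_alt
proof (intro conjI allI impI bl)
  define I where "I = \<bar>\<integral>t. G t \<partial>M\<bar>"
  fix e :: real assume e: "0 < e"
  show "\<exists>d>0. \<forall>W. norm (W - Z) < d \<longrightarrow>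
      norm ((\<integral>t. \<psi> t W \<partial>M) - (\<integral>t. \<psi> t Z \<partial>M) - (\<integral>t. L t (W - Z) \<partial>M)) \<le> e * norm (W - Z)"
  proof (intro exI[of _ "min 1 (e / (I + 1))"] conjI allI impI)
    show "0 < min 1 (e / (I + 1))" using e by (simp add: I_def)
    fix W assume W: "norm (W - Z) < min 1 (e / (I + 1))"
    define H where "H = W - Z"
    have I1: "0 < I + 1" by (simp add: I_def add_nonneg_pos)
    have H1: "norm H \<le> 1" using W by (simp add: H_def)
    have "norm H < e / (I + 1)" using W by (simp add: H_def)
    then have "norm H * (I + 1) < e"
      using I1 by (simp add: pos_less_divide_eq)
    moreover have "I * norm H \<le> norm H * (I + 1)" by (simp add: algebra_simps)
    ultimately have He: "I * norm H \<le> e" by linarith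
    have int_W: "integrable M (\<lambda>t. \<psi> t (Z + H))" and int_Z: "integrable M (\<lambda>t. \<psi> t Z)"
      using H1 by (auto intro: int_\<psi>)
    have "(\<integral>t. \<psi> t (Z + H) \<partial>M) - (\<integral>t. \<psi> t Z \<partial>M) - (\<integral>t. L t H \<partial>M)
        = (\<integral>t. \<psi> t (Z + H) - \<psi> t Z - L t H \<partial>M)"
      using int_W int_Z int_L by simp
    also have "norm \<dots> \<le> (\<integral>t. norm (\<psi> t (Z + H) - \<psi> t Z - L t H) \<partial>M)"
      by (rule integral_norm_bound)
    also have "\<dots> \<le> (\<integral>t. G t * (norm H)\<^sup>2 \<partial>M)"
      using rem H1 int_W int_Z int_L G by (intro integral_mono) auto
    also have "\<dots> = (\<integral>t. G t \<partial>M) * (norm H)\<^sup>2" by simp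
    also have "\<dots> \<le> I * (norm H)\<^sup>2" by (intro mult_right_mono) (auto simp: I_def)
    also have "\<dots> \<le> e * norm H"
      using mult_right_mono[OF He norm_ge_zero[of H]] by (simp add: power2_eq_square mult.assoc)
    finally show "norm ((\<integral>t. \<psi> t W \<partial>M) - (\<integral>t. \<psi> t Z \<partial>M) - (\<integral>t. L t (W - Z) \<partial>M)) \<le> e * norm (W - Z)"
      by (simp add: H_def)
  qed
qed

lemma entire_vec_integral:
  fixes \<psi> :: "'t \<Rightarrow> complex^'n \<Rightarrow> complex"
  assumes ent: "\<And>t. entire_vec (\<psi> t)"
    and meas: "\<And>W. (\<lambda>t. \<psi> t W) \<in> borel_measurable M"
    and dom: "\<And>Z. \<exists>G. integrable M G \<and> (\<forall>t\<in>space M. \<forall>W. norm (W - Z) \<le> 2 \<longrightarrow> norm (\<psi> t W) \<le> G t)"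
  shows "entire_vec (\<lambda>Z. \<integral>t. \<psi> t Z \<partial>M)"
  unfolding entire_vec_def
proof
  fix Z
  obtain G where G: "integrable M G" "\<And>t W. t \<in> space M \<Longrightarrow> norm (W - Z) \<le> 2 \<Longrightarrow> norm (\<psi> t W) \<le> G t"
    using dom[of Z] by blast
  have "\<forall>t. \<exists>L. (\<psi> t has_derivative L) (at Z) \<and> (\<forall>c v. L (\<chi> k. c * v $ k) = c * L v)"
    using ent unfolding entire_vec_def by blast
  then obtain L where L: "\<And>t. (\<psi> t has_derivative L t) (at Z)" "\<And>t c v. L t (\<chi> k. c * v $ k) = c * L t v"
    by metis
  have G_nonneg: "0 \<le> G t" if "t \<in> space M" for t
  proof -
    have "norm (\<psi> t Z) \<le> G t" using G(2)[OF that, of Z] by simp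
    then show ?thesis by (rule order_trans[OF norm_ge_zero])
  qed
  have L_bound: "norm (L t H) \<le> 4 * G t * norm H" if "t \<in> space M" for t H
    using entire_vec_derivative_bound[OF ent L(1) L(2) G(2)[OF that]] .
  have rem: "norm (\<psi> t (Z + H) - \<psi> t Z - L t H) \<le> 2 * G t * (norm H)\<^sup>2"
    if "t \<in> space M" "norm H \<le> 1" for t H
    using entire_vec_remainder_bound[OF ent L(1) L(2) G(2)[OF that(1)] that(2)] .
  have int_L: "integrable M (\<lambda>t. L t H)" for H
  proof (rule Bochner_Integration.integrable_bound[where f="\<lambda>t. 4 * G t * norm H"])
    show "(\<lambda>t. L t H) \<in> borel_measurable M"
      using L(1) meas by (rule borel_measurable_derivative_param)
    show "AE t in M. norm (L t H) \<le> norm (4 * G t * norm H)"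
      using L_bound G_nonneg by (intro AE_I2) (simp add: abs_mult)
  qed (use G(1) in simp)
  have "bounded_linear (\<lambda>H. \<integral>t. L t H \<partial>M)"
    using G(1) L_bound
    by (intro bounded_linear_integral[where K="\<lambda>t. 4 * G t"] has_derivative_linear[OF L(1)] int_L) auto
  moreover have "integrable M (\<lambda>t. \<psi> t W)" if W: "norm (W - Z) \<le> 1" for W
  proof (rule Bochner_Integration.integrable_bound[OF G(1) meas])
    have "norm (\<psi> t W) \<le> norm (G t)" if "t \<in> space M" for t
      using G(2)[OF that, of W] W G_nonneg[OF that] by simp
    then show "AE t in M. norm (\<psi> t W) \<le> norm (G t)" by (rule AE_I2)
  qed
  ultimately have "((\<lambda>Z. \<integral>t. \<psi> t Z \<partial>M) has_derivative (\<lambda>H. \<integral>t. L t H \<partial>M)) (at Z)"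
    using rem G(1)
    by (intro has_derivative_integral_quadratic_remainder[where G="\<lambda>t. 2 * G t"] int_L) auto
  moreover have "(\<integral>t. L t (\<chi> k. c * v $ k) \<partial>M) = c * (\<integral>t. L t v \<partial>M)" for c v
    by (simp add: L(2))
  ultimately show "\<exists>D. ((\<lambda>Z. \<integral>t. \<psi> t Z \<partial>M) has_derivative D) (at Z) \<and> (\<forall>c v. D (\<chi> k. c * v $ k) = c * D v)"
    by blast
qed

section \<open>Gaussian integrals and square integrable functions\<close>

lemma nn_integral_gaussian:
  fixes \<alpha> p \<beta> :: real
  assumes \<alpha>: "0 < \<alpha>"
  shows "(\<integral>\<^sup>+s. ennreal (exp (- \<alpha> * (s - p)\<^sup>2 + \<beta> * s)) \<partial>lborel)
       = ennreal (sqrt (pi / \<alpha>) * exp (\<beta> * p + \<beta>\<^sup>2 / (4 * \<alpha>)))"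
proof -
  define K where "K = sqrt (pi / \<alpha>) * exp (\<beta> * p + \<beta>\<^sup>2 / (4 * \<alpha>))"
  \<comment> \<open>Complete the square: the integrand is K times the normal density with mean q and variance 1/(2\<alpha>).\<close>
  define q where "q = p + \<beta> / (2 * \<alpha>)"
  define \<sigma> where "\<sigma> = sqrt (1 / (2 * \<alpha>))"
  have \<sigma>: "0 < \<sigma>" "\<sigma>\<^sup>2 = 1 / (2 * \<alpha>)" "2 * pi * \<sigma>\<^sup>2 = pi / \<alpha>"
    using \<alpha> by (simp_all add: \<sigma>_def)
  have "exp (- \<alpha> * (s - p)\<^sup>2 + \<beta> * s) = K * normal_density q \<sigma> s" for s
  proof -
    have "- \<alpha> * (s - p)\<^sup>2 + \<beta> * s = (\<beta> * p + \<beta>\<^sup>2 / (4 * \<alpha>)) + (- (s - q)\<^sup>2 / (2 * \<sigma>\<^sup>2))"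
      using \<alpha> unfolding \<sigma>(2) by (simp add: q_def power2_eq_square field_simps)
    then have "exp (- \<alpha> * (s - p)\<^sup>2 + \<beta> * s) = exp (\<beta> * p + \<beta>\<^sup>2 / (4 * \<alpha>)) * exp (- (s - q)\<^sup>2 / (2 * \<sigma>\<^sup>2))"
      by (simp only: exp_add)
    then show ?thesis
      using \<alpha> by (simp add: K_def normal_density_def \<sigma>(3))
  qed
  then have "(\<integral>\<^sup>+s. ennreal (exp (- \<alpha> * (s - p)\<^sup>2 + \<beta> * s)) \<partial>lborel)
      = (\<integral>\<^sup>+s. ennreal K * ennreal (normal_density q \<sigma> s) \<partial>lborel)"
    using \<alpha> by (simp add: ennreal_mult K_def)
  also have "\<dots> = ennreal K * (\<integral>\<^sup>+s. ennreal (normal_density q \<sigma> s) \<partial>lborel)"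
    by (rule nn_integral_cmult) simp
  also have "(\<integral>\<^sup>+s. ennreal (normal_density q \<sigma> s) \<partial>lborel) = 1"
    using \<sigma>(1) by (simp add: nn_integral_eq_integral integral_normal_density)
  finally show ?thesis by (simp add: K_def)
qed

lemma prod_Basis_real_vec: "(\<Prod>b\<in>(Basis :: (real^'d) set). g b) = (\<Prod>j\<in>UNIV. g (axis j 1))"
proof -
  have B: "(Basis :: (real^'d) set) = range (\<lambda>j. axis j 1)"
    by (auto simp: Basis_vec_def)
  have "inj (\<lambda>j. axis j (1::real) :: real^'d)"
    by (auto simp: inj_def axis_eq_axis)
  then show ?thesis unfolding B by (rule prod.reindex[unfolded comp_def])
qed

lemma nn_integral_prod_real_vec:
  fixes f :: "'d::finite \<Rightarrow> real \<Rightarrow> ennreal"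
  assumes "\<And>j. f j \<in> borel_measurable borel"
  shows "(\<integral>\<^sup>+t. (\<Prod>j\<in>UNIV. f j (t $ j)) \<partial>lborel) = (\<Prod>j\<in>UNIV. \<integral>\<^sup>+s. f j s \<partial>lborel)"
proof -
  define F where "F b = f (SOME j. b = axis j 1)" for b :: "real^'d"
  have F: "F (axis j 1) = f j" for j
    unfolding F_def by (rule arg_cong[where f=f], rule some_equality) (auto simp: axis_eq_axis)
  have "(\<integral>\<^sup>+t. (\<Prod>j\<in>UNIV. f j (t $ j)) \<partial>lborel) = (\<integral>\<^sup>+t. (\<Prod>b\<in>Basis. F b (t \<bullet> b)) \<partial>lborel)"
    by (simp add: prod_Basis_real_vec F inner_axis)
  also have "\<dots> = (\<Prod>b\<in>Basis. \<integral>\<^sup>+s. F b s \<partial>lborel)"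
    by (rule nn_integral_lborel_prod) (auto simp: F_def assms)
  finally show ?thesis by (simp add: prod_Basis_real_vec F)
qed

lemma continuous_on_imp_lebesgue_measurable:
  fixes f :: "real^'d \<Rightarrow> 'b::topological_space"
  shows "continuous_on UNIV f \<Longrightarrow> f \<in> borel_measurable lebesgue"
  by (intro measurable_completion) (simp add: borel_measurable_continuous_onI)

lemma integrable_gaussian_vec:
  fixes \<alpha> p :: "real^'d::finite"
  assumes \<alpha>: "\<And>j. 0 < \<alpha> $ j"
  shows "integrable lebesgue (\<lambda>t::real^'d. \<Prod>j\<in>UNIV. exp (- \<alpha> $ j * (t $ j - p $ j)\<^sup>2))"
proof -
  have "continuous_on UNIV (\<lambda>t::real^'d. \<Prod>j\<in>UNIV. exp (- \<alpha> $ j * (t $ j - p $ j)\<^sup>2))"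
    by (intro continuous_intros linear_continuous_on bounded_linear_vec_nth)
  then have meas: "(\<lambda>t::real^'d. \<Prod>j\<in>UNIV. exp (- \<alpha> $ j * (t $ j - p $ j)\<^sup>2)) \<in> borel_measurable lborel"
    using borel_measurable_continuous_onI by simp
  have gauss: "(\<integral>\<^sup>+s. ennreal (exp (- \<alpha> $ j * (s - p $ j)\<^sup>2)) \<partial>lborel) = ennreal (sqrt (pi / \<alpha> $ j))" for j
    using nn_integral_gaussian[of "\<alpha> $ j" "p $ j" 0] \<alpha> by simp
  have "(\<integral>\<^sup>+t. ennreal (\<Prod>j\<in>UNIV. exp (- \<alpha> $ j * (t $ j - p $ j)\<^sup>2)) \<partial>lborel)
      = (\<integral>\<^sup>+t. (\<Prod>j\<in>UNIV. ennreal (exp (- \<alpha> $ j * (t $ j - p $ j)\<^sup>2))) \<partial>lborel)"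
    by (simp add: prod_ennreal)
  also have "\<dots> = (\<Prod>j\<in>UNIV. \<integral>\<^sup>+s. ennreal (exp (- \<alpha> $ j * (s - p $ j)\<^sup>2)) \<partial>lborel)"
    by (rule nn_integral_prod_real_vec[of "\<lambda>j s. ennreal (exp (- \<alpha> $ j * (s - p $ j)\<^sup>2))"]) measurable
  also have "\<dots> = (\<Prod>j\<in>UNIV. ennreal (sqrt (pi / \<alpha> $ j)))"
    by (simp only: gauss)
  also have "\<dots> = ennreal (\<Prod>j\<in>UNIV. sqrt (pi / \<alpha> $ j))"
    using \<alpha> by (simp add: prod_ennreal less_imp_le)
  finally have "integrable lborel (\<lambda>t::real^'d. \<Prod>j\<in>UNIV. exp (- \<alpha> $ j * (t $ j - p $ j)\<^sup>2))"
    using meas by (intro integrableI_nn_integral_finite) (auto simp: prod_nonneg)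
  with meas show ?thesis by (simp add: integrable_completion)
qed

lemma integrable_norm_mult_L2:
  fixes g :: "'t \<Rightarrow> 'b::{real_normed_vector, second_countable_topology}"
  assumes g: "g \<in> borel_measurable M" "integrable M (\<lambda>t. (norm (g t))\<^sup>2)"
    and h: "h \<in> borel_measurable M" "integrable M (\<lambda>t. (h t)\<^sup>2)"
  shows "integrable M (\<lambda>t. norm (g t) * h t)"
proof (rule Bochner_Integration.integrable_bound[where f="\<lambda>t. (norm (g t))\<^sup>2 + (h t)\<^sup>2"])
  have "\<bar>u * v\<bar> \<le> u\<^sup>2 + v\<^sup>2" for u v :: real
  proof -
    have "0 \<le> (\<bar>u\<bar> - \<bar>v\<bar>)\<^sup>2" by simp
    then have "2 * (\<bar>u\<bar> * \<bar>v\<bar>) \<le> u\<^sup>2 + v\<^sup>2" by (simp add: power2_eq_square algebra_simps)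
    moreover have "0 \<le> \<bar>u\<bar> * \<bar>v\<bar>" by simp
    ultimately have "\<bar>u\<bar> * \<bar>v\<bar> \<le> u\<^sup>2 + v\<^sup>2" by linarith
    then show ?thesis by (simp add: abs_mult)
  qed
  then show "AE t in M. norm (norm (g t) * h t) \<le> norm ((norm (g t))\<^sup>2 + (h t)\<^sup>2)"
    by (intro AE_I2) simp
qed (use g h in auto)

lemma integrable_norm_mult_gaussian:
  fixes g :: "real^'d::finite \<Rightarrow> 'b::{real_normed_vector, second_countable_topology}"
  assumes g: "g \<in> borel_measurable lebesgue" "integrable lebesgue (\<lambda>t. (norm (g t))\<^sup>2)"
    and \<alpha>: "\<And>j. 0 < \<alpha> $ j"
  shows "integrable lebesgue (\<lambda>t. norm (g t) * (\<Prod>j\<in>UNIV. exp (- \<alpha> $ j * (t $ j - p $ j)\<^sup>2)))"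
proof (rule integrable_norm_mult_L2[OF g])
  show "(\<lambda>t. \<Prod>j\<in>UNIV. exp (- \<alpha> $ j * (t $ j - p $ j)\<^sup>2)) \<in> borel_measurable lebesgue"
    by (intro continuous_on_imp_lebesgue_measurable continuous_intros linear_continuous_on bounded_linear_vec_nth)
  have "(\<Prod>j\<in>UNIV. exp (- \<alpha> $ j * (t $ j - p $ j)\<^sup>2))\<^sup>2
      = (\<Prod>j\<in>UNIV. exp (- (\<chi> j. 2 * \<alpha> $ j) $ j * (t $ j - p $ j)\<^sup>2))" for t :: "real^'d"
    by (simp add: prod_power_distrib exp_double[symmetric] mult.assoc)
  moreover have "integrable lebesgue (\<lambda>t::real^'d. \<Prod>j\<in>UNIV. exp (- (\<chi> j. 2 * \<alpha> $ j) $ j * (t $ j - p $ j)\<^sup>2))"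
    using \<alpha> by (intro integrable_gaussian_vec) simp
  ultimately show "integrable lebesgue (\<lambda>t. (\<Prod>j\<in>UNIV. exp (- \<alpha> $ j * (t $ j - p $ j)\<^sup>2))\<^sup>2)"
    by simp
qed

lemma norm_integral_le_Cauchy_Schwarz:
  fixes u :: "'t \<Rightarrow> 'b::{banach, second_countable_topology}"
    and g :: "'t \<Rightarrow> 'c::{real_normed_vector, second_countable_topology}"
  assumes u: "integrable M u" and meas[measurable]: "g \<in> borel_measurable M" "h \<in> borel_measurable M"
    and g2: "integrable M (\<lambda>t. (norm (g t))\<^sup>2)"
    and h2: "(\<integral>\<^sup>+t. ennreal ((h t)\<^sup>2) \<partial>M) = ennreal H" "0 \<le> H"
    and h: "\<And>t. t \<in> space M \<Longrightarrow> 0 \<le> h t"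
    and bound: "\<And>t. t \<in> space M \<Longrightarrow> norm (u t) \<le> norm (g t) * h t"
  shows "norm (\<integral>t. u t \<partial>M) \<le> sqrt ((\<integral>t. (norm (g t))\<^sup>2 \<partial>M) * H)"
proof -
  have G: "0 \<le> (\<integral>t. (norm (g t))\<^sup>2 \<partial>M)" by (rule Bochner_Integration.integral_nonneg) simp
  have "ennreal (norm (\<integral>t. u t \<partial>M)) \<le> (\<integral>\<^sup>+t. ennreal (norm (u t)) \<partial>M)"
    by (rule integral_norm_bound_ennreal[OF u])
  also have "\<dots> \<le> (\<integral>\<^sup>+t. ennreal (norm (g t)) * ennreal (h t) \<partial>M)"
  proof (rule nn_integral_mono)
    fix t assume "t \<in> space M"
    then show "ennreal (norm (u t)) \<le> ennreal (norm (g t)) * ennreal (h t)"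
      using bound h by (simp add: ennreal_mult[symmetric] ennreal_leI)
  qed
  finally have "(ennreal (norm (\<integral>t. u t \<partial>M)))\<^sup>2 \<le> (\<integral>\<^sup>+t. ennreal (norm (g t)) * ennreal (h t) \<partial>M)\<^sup>2"
    by (rule power_mono) simp
  also have "\<dots> \<le> (\<integral>\<^sup>+t. ennreal (norm (g t)) ^ 2 \<partial>M) * (\<integral>\<^sup>+t. ennreal (h t) ^ 2 \<partial>M)"
    by (rule Cauchy_Schwarz_nn_integral) measurable
  also have "\<dots> = (\<integral>\<^sup>+t. ennreal ((norm (g t))\<^sup>2) \<partial>M) * (\<integral>\<^sup>+t. ennreal ((h t)\<^sup>2) \<partial>M)"
    using h by (intro arg_cong2[where f="(*)"] nn_integral_cong) (simp_all add: ennreal_power)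
  also have "\<dots> = ennreal ((\<integral>t. (norm (g t))\<^sup>2 \<partial>M) * H)"
    using G h2 by (simp add: nn_integral_eq_integral[OF g2] ennreal_mult)
  finally have "(norm (\<integral>t. u t \<partial>M))\<^sup>2 \<le> (\<integral>t. (norm (g t))\<^sup>2 \<partial>M) * H"
    using G h2(2) by (simp add: ennreal_power ennreal_le_iff)
  then show ?thesis by (rule real_le_rsqrt)
qed

section \<open>The short-time Fourier transform extended to C^2d\<close>

definition stft_kernel ::
    "(complex^'d \<Rightarrow> complex) \<Rightarrow> (real^'d \<Rightarrow> complex) \<Rightarrow> real \<Rightarrow> real^'d \<Rightarrow> complex^('d + 'd) \<Rightarrow> complex" where
  "stft_kernel \<Phi> g \<sigma> t Z = g t * (\<Phi> (\<chi> j. complex_of_real (t $ j) - Z $ Inl j) *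
      exp (\<i> * complex_of_real (2 * pi * \<sigma>) * (\<Sum>j\<in>UNIV. Z $ Inr j * complex_of_real (t $ j))))"

definition stft_ext ::
    "(complex^'d \<Rightarrow> complex) \<Rightarrow> (real^'d \<Rightarrow> complex) \<Rightarrow> real \<Rightarrow> complex^('d + 'd) \<Rightarrow> complex" where
  "stft_ext \<Phi> g \<sigma> Z = (\<integral>t. stft_kernel \<Phi> g \<sigma> t Z \<partial>lebesgue)"

lemma entire_vec_stft_kernel:
  fixes \<Phi> :: "complex^'d::finite \<Rightarrow> complex"
  assumes "entire_vec \<Phi>"
  shows "entire_vec (stft_kernel \<Phi> g \<sigma> t)"
proof -
  have P: "bounded_linear (\<lambda>Z::complex^('d+'d). (\<chi> j. - Z $ Inl j) :: complex^'d)"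
    unfolding linear_conv_bounded_linear[symmetric] by (rule linearI) (simp_all add: vec_eq_iff)
  have "((\<lambda>Z. (\<chi> j. complex_of_real (t $ j)) + (\<chi> j. - Z $ Inl j)) has_derivative (\<lambda>v. \<chi> j. - v $ Inl j)) (at Z)"
    for Z :: "complex^('d+'d)"
    using has_derivative_add[OF has_derivative_const bounded_linear_imp_has_derivative[OF P]] by simp
  then have "entire_vec (\<lambda>Z::complex^('d+'d). \<Phi> ((\<chi> j. complex_of_real (t $ j)) + (\<chi> j. - Z $ Inl j)))"
    by (rule entire_vec_compose[OF assms]) (simp add: vec_eq_iff)
  moreover have "(\<chi> j. complex_of_real (t $ j)) + (\<chi> j. - Z $ Inl j) = (\<chi> j. complex_of_real (t $ j) - Z $ Inl j)"
    for Z :: "complex^('d+'d)"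
    by (simp add: vec_eq_iff)
  moreover have "entire_vec (\<lambda>Z::complex^('d+'d).
      exp (\<i> * complex_of_real (2 * pi * \<sigma>) * (\<Sum>j\<in>UNIV. Z $ Inr j * complex_of_real (t $ j))))"
    by (intro entire_vec_holomorphic_comp[OF DERIV_exp] entire_vec_bounded_linear
        bounded_linear_const_mult bounded_linear_sum bounded_linear_mult_const bounded_linear_vec_nth)
      (simp add: sum_distrib_left algebra_simps)
  ultimately show ?thesis
    unfolding stft_kernel_def[abs_def] by (intro entire_vec_mult entire_vec_const) simp_all
qed

lemma borel_measurable_stft_kernel:
  assumes "g \<in> borel_measurable lebesgue" and "entire_vec \<Phi>"
  shows "(\<lambda>t. stft_kernel \<Phi> g \<sigma> t Z) \<in> borel_measurable lebesgue"
  unfolding stft_kernel_def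
  by (intro borel_measurable_times assms(1) continuous_on_imp_lebesgue_measurable continuous_intros
      continuous_on_compose2[OF entire_vec_continuous_on[OF assms(2)]] linear_continuous_on bounded_linear_vec_nth)
    auto

lemma stft_kernel_norm_le:
  assumes "\<Phi> \<in> O_ab a b"
  obtains C where "C > 0" "\<And>t W. norm (stft_kernel \<Phi> g \<sigma> t W) \<le> C * norm (g t) *
      (\<Prod>j\<in>UNIV. exp (- a $ j * (t $ j - Re (W $ Inl j))\<^sup>2 + b $ j * (Im (W $ Inl j))\<^sup>2
                       - 2 * pi * \<sigma> * Im (W $ Inr j) * t $ j))"
proof -
  obtain C where C: "C > 0"
    "\<And>x y. norm (\<Phi> (cplx_pt x y)) \<le> C * (\<Prod>j\<in>UNIV. exp (- a $ j * (x $ j)\<^sup>2) * exp (b $ j * (y $ j)\<^sup>2))"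
    using assms unfolding O_ab_def by blast
  have "norm (stft_kernel \<Phi> g \<sigma> t W) \<le> C * norm (g t) *
      (\<Prod>j\<in>UNIV. exp (- a $ j * (t $ j - Re (W $ Inl j))\<^sup>2 + b $ j * (Im (W $ Inl j))\<^sup>2
                       - 2 * pi * \<sigma> * Im (W $ Inr j) * t $ j))" for t W
  proof -
    have shift: "(\<chi> j. complex_of_real (t $ j) - W $ Inl j)
        = cplx_pt (\<chi> j. t $ j - Re (W $ Inl j)) (\<chi> j. - Im (W $ Inl j))"
      by (simp add: cplx_pt_def vec_eq_iff complex_eq_iff)
    have "Re (\<i> * complex_of_real (2 * pi * \<sigma>) * (\<Sum>j\<in>UNIV. W $ Inr j * complex_of_real (t $ j)))
        = (\<Sum>j\<in>UNIV. - (2 * pi * \<sigma> * Im (W $ Inr j) * t $ j))"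
      by (simp add: Im_sum sum_distrib_left algebra_simps)
    then have "norm (exp (\<i> * complex_of_real (2 * pi * \<sigma>) * (\<Sum>j\<in>UNIV. W $ Inr j * complex_of_real (t $ j))))
        = (\<Prod>j\<in>UNIV. exp (- (2 * pi * \<sigma> * Im (W $ Inr j) * t $ j)))"
      by (simp add: exp_sum)
    have \<Phi>_bound: "norm (\<Phi> (cplx_pt (\<chi> j. t $ j - Re (W $ Inl j)) (\<chi> j. - Im (W $ Inl j))))
        \<le> C * (\<Prod>j\<in>UNIV. exp (- a $ j * (t $ j - Re (W $ Inl j))\<^sup>2) * exp (b $ j * (Im (W $ Inl j))\<^sup>2))"
      using C(2)[of "\<chi> j. t $ j - Re (W $ Inl j)" "\<chi> j. - Im (W $ Inl j)"] by simp
    have "norm (stft_kernel \<Phi> g \<sigma> t W) = norm (g t) * norm (\<Phi> (cplx_pt (\<chi> j. t $ j - Re (W $ Inl j)) (\<chi> j. - Im (W $ Inl j))))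
        * (\<Prod>j\<in>UNIV. exp (- (2 * pi * \<sigma> * Im (W $ Inr j) * t $ j)))"
      using \<open>norm (exp _) = _\<close> by (simp add: stft_kernel_def norm_mult shift)
    also have "\<dots> \<le> norm (g t) * (C * (\<Prod>j\<in>UNIV. exp (- a $ j * (t $ j - Re (W $ Inl j))\<^sup>2) * exp (b $ j * (Im (W $ Inl j))\<^sup>2)))
        * (\<Prod>j\<in>UNIV. exp (- (2 * pi * \<sigma> * Im (W $ Inr j) * t $ j)))"
      using \<Phi>_bound by (intro mult_right_mono mult_left_mono) (auto intro: prod_nonneg)
    also have "\<dots> = C * norm (g t) * (\<Prod>j\<in>UNIV. exp (- a $ j * (t $ j - Re (W $ Inl j))\<^sup>2)
        * exp (b $ j * (Im (W $ Inl j))\<^sup>2) * exp (- (2 * pi * \<sigma> * Im (W $ Inr j) * t $ j)))"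
      by (simp add: prod.distrib mult_ac)
    also have "\<dots> = C * norm (g t) *
      (\<Prod>j\<in>UNIV. exp (- a $ j * (t $ j - Re (W $ Inl j))\<^sup>2 + b $ j * (Im (W $ Inl j))\<^sup>2
                       - 2 * pi * \<sigma> * Im (W $ Inr j) * t $ j))"
      by (simp only: exp_add[symmetric] diff_conv_add_uminus)
    finally show ?thesis .
  qed
  with C(1) show ?thesis using that by blast
qed

text \<open>Locally in (r, y', \<eta>') the exponent of the kernel bound is dominated by a fixed Gaussian in t.\<close>
lemma stft_kernel_exponent_local_bound:
  fixes a b \<sigma> x y \<eta> t r y' \<eta>' :: real
  assumes a: "0 < a" and b: "0 \<le> b"
    and r: "\<bar>r - x\<bar> \<le> 2" and y': "\<bar>y' - y\<bar> \<le> 2" and \<eta>': "\<bar>\<eta>' - \<eta>\<bar> \<le> 2"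
  shows "- a * (t - r)\<^sup>2 + b * y'\<^sup>2 - 2 * pi * \<sigma> * \<eta>' * t
     \<le> - (a / 4) * (t - x)\<^sup>2 + (4 * a + b * (\<bar>y\<bar> + 2)\<^sup>2 + 2 * pi * \<bar>\<sigma>\<bar> * (\<bar>\<eta>\<bar> + 2) * \<bar>x\<bar>
         + (2 * pi * \<bar>\<sigma>\<bar> * (\<bar>\<eta>\<bar> + 2))\<^sup>2 / a)"
proof -
  define m where "m = 2 * pi * \<bar>\<sigma>\<bar> * (\<bar>\<eta>\<bar> + 2)"
  have "(t - x)\<^sup>2 \<le> 2 * (t - r)\<^sup>2 + 2 * (r - x)\<^sup>2"
    using zero_le_power2[of "t - 2 * r + x"] by (simp add: power2_eq_square algebra_simps)
  moreover have "(r - x)\<^sup>2 \<le> 2\<^sup>2" using r by (metis abs_le_square_iff abs_numeral)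
  ultimately have "a * (t - x)\<^sup>2 \<le> a * (2 * (t - r)\<^sup>2 + 8)" using a by (intro mult_left_mono) auto
  then have quad: "- a * (t - r)\<^sup>2 \<le> - (a / 2) * (t - x)\<^sup>2 + 4 * a" by (simp add: algebra_simps)
  have "y'\<^sup>2 \<le> (\<bar>y\<bar> + 2)\<^sup>2" using y' by (intro power2_le_iff_abs_le[THEN iffD2]) auto
  then have imag: "b * y'\<^sup>2 \<le> b * (\<bar>y\<bar> + 2)\<^sup>2" using b by (rule mult_left_mono)
  have "- 2 * pi * \<sigma> * \<eta>' * t \<le> \<bar>2 * pi * \<sigma> * \<eta>' * t\<bar>" by simp
  also have "\<dots> = 2 * pi * \<bar>\<sigma>\<bar> * \<bar>\<eta>'\<bar> * \<bar>t\<bar>" by (simp add: abs_mult)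
  also have "\<dots> \<le> 2 * pi * \<bar>\<sigma>\<bar> * (\<bar>\<eta>\<bar> + 2) * (\<bar>t - x\<bar> + \<bar>x\<bar>)"
    using \<eta>' by (intro mult_mono mult_left_mono) auto
  finally have freq: "- 2 * pi * \<sigma> * \<eta>' * t \<le> m * \<bar>t - x\<bar> + m * \<bar>x\<bar>"
    by (simp add: m_def algebra_simps)
  \<comment> \<open>The linear growth of the oscillating factor is absorbed by a quarter of the Gaussian decay.\<close>
  have "0 \<le> (a / 4) * (\<bar>t - x\<bar> - 2 * m / a)\<^sup>2" using a by simp
  also have "\<dots> = (a / 4) * (t - x)\<^sup>2 + m\<^sup>2 / a - m * \<bar>t - x\<bar>"
    using a by (simp add: power2_eq_square field_simps)
  finally have amgm: "m * \<bar>t - x\<bar> \<le> (a / 4) * (t - x)\<^sup>2 + m\<^sup>2 / a" by simp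
  have "- a * (t - r)\<^sup>2 + b * y'\<^sup>2 - 2 * pi * \<sigma> * \<eta>' * t
      \<le> - (a / 2) * (t - x)\<^sup>2 + 4 * a + b * (\<bar>y\<bar> + 2)\<^sup>2 + ((a / 4) * (t - x)\<^sup>2 + m\<^sup>2 / a) + m * \<bar>x\<bar>"
    using quad imag freq amgm by linarith
  also have "\<dots> = - (a / 4) * (t - x)\<^sup>2 + (4 * a + b * (\<bar>y\<bar> + 2)\<^sup>2 + m * \<bar>x\<bar> + m\<^sup>2 / a)"
    by (simp add: algebra_simps)
  finally show ?thesis by (simp add: m_def)
qed

lemma stft_kernel_dominated:
  fixes \<Phi> :: "complex^'d::finite \<Rightarrow> complex"
  assumes a: "\<And>j. 0 < a $ j" and b: "\<And>j. 0 < b $ j" and \<Phi>: "\<Phi> \<in> O_ab a b" and g: "g \<in> L2"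
  shows "\<exists>G. integrable lebesgue G \<and>
    (\<forall>t\<in>space lebesgue. \<forall>W. norm (W - Z) \<le> 2 \<longrightarrow> norm (stft_kernel \<Phi> g \<sigma> t W) \<le> G t)"
proof -
  obtain C where C: "C > 0" "\<And>t W. norm (stft_kernel \<Phi> g \<sigma> t W) \<le> C * norm (g t) *
      (\<Prod>j\<in>UNIV. exp (- a $ j * (t $ j - Re (W $ Inl j))\<^sup>2 + b $ j * (Im (W $ Inl j))\<^sup>2
                       - 2 * pi * \<sigma> * Im (W $ Inr j) * t $ j))"
    using stft_kernel_norm_le[OF \<Phi>, of g \<sigma>] by blast
  define x where "x = (\<chi> j. Re (Z $ Inl j))"
  define y where "y j = Im (Z $ Inl j)" for j
  define \<eta> where "\<eta> j = Im (Z $ Inr j)" for j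
  define K where "K j = 4 * a $ j + b $ j * (\<bar>y j\<bar> + 2)\<^sup>2 + 2 * pi * \<bar>\<sigma>\<bar> * (\<bar>\<eta> j\<bar> + 2) * \<bar>x $ j\<bar>
         + (2 * pi * \<bar>\<sigma>\<bar> * (\<bar>\<eta> j\<bar> + 2))\<^sup>2 / a $ j" for j
  define G where "G t = C * (\<Prod>j\<in>UNIV. exp (K j)) *
      (norm (g t) * (\<Prod>j\<in>UNIV. exp (- (\<chi> j. a $ j / 4) $ j * (t $ j - x $ j)\<^sup>2)))" for t
  have "norm (stft_kernel \<Phi> g \<sigma> t W) \<le> G t" if W: "norm (W - Z) \<le> 2" for t W
  proof -
    have near: "cmod (W $ k - Z $ k) \<le> 2" for k
      using Finite_Cartesian_Product.norm_nth_le[of "W - Z" k] W by simp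
    have "- a $ j * (t $ j - Re (W $ Inl j))\<^sup>2 + b $ j * (Im (W $ Inl j))\<^sup>2 - 2 * pi * \<sigma> * Im (W $ Inr j) * t $ j
        \<le> K j + (- (a $ j / 4) * (t $ j - x $ j)\<^sup>2)" for j
    proof -
      have "\<bar>Re (W $ Inl j) - x $ j\<bar> \<le> 2" "\<bar>Im (W $ Inl j) - y j\<bar> \<le> 2" "\<bar>Im (W $ Inr j) - \<eta> j\<bar> \<le> 2"
        using abs_Re_le_cmod[of "W $ Inl j - Z $ Inl j"] abs_Im_le_cmod[of "W $ Inl j - Z $ Inl j"]
          abs_Im_le_cmod[of "W $ Inr j - Z $ Inr j"] near[of "Inl j"] near[of "Inr j"]
        by (simp_all add: x_def y_def \<eta>_def)
      from stft_kernel_exponent_local_bound[OF a[of j] less_imp_le[OF b[of j]] this, where t="t $ j" and \<sigma>=\<sigma>]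
      show ?thesis
        by (simp add: K_def)
    qed
    then have "C * norm (g t) * (\<Prod>j\<in>UNIV. exp (- a $ j * (t $ j - Re (W $ Inl j))\<^sup>2 + b $ j * (Im (W $ Inl j))\<^sup>2
                       - 2 * pi * \<sigma> * Im (W $ Inr j) * t $ j))
        \<le> C * norm (g t) * (\<Prod>j\<in>UNIV. exp (K j) * exp (- (a $ j / 4) * (t $ j - x $ j)\<^sup>2))"
      using C(1) by (intro mult_left_mono prod_mono) (auto simp: exp_add[symmetric])
    also have "\<dots> = G t" by (simp add: G_def prod.distrib)
    finally show ?thesis using C(2)[of t W] by linarith
  qed
  moreover have "integrable lebesgue G"
    unfolding G_def using g a
    by (intro integrable_mult_right integrable_norm_mult_gaussian) (auto simp: L2_def)
  ultimately show ?thesis by blast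
qed

lemma integrable_stft_kernel:
  fixes \<Phi> :: "complex^'d::finite \<Rightarrow> complex"
  assumes a: "\<And>j. 0 < a $ j" and b: "\<And>j. 0 < b $ j" and \<Phi>: "\<Phi> \<in> O_ab a b" and g: "g \<in> L2"
  shows "integrable lebesgue (\<lambda>t. stft_kernel \<Phi> g \<sigma> t Z)"
proof -
  obtain G where G: "integrable lebesgue G" "\<And>t. norm (stft_kernel \<Phi> g \<sigma> t Z) \<le> G t"
    using stft_kernel_dominated[OF a b \<Phi> g, of Z \<sigma>] by auto
  show ?thesis
  proof (rule Bochner_Integration.integrable_bound[OF G(1)])
    show "(\<lambda>t. stft_kernel \<Phi> g \<sigma> t Z) \<in> borel_measurable lebesgue"
      using g \<Phi> by (intro borel_measurable_stft_kernel) (auto simp: L2_def O_ab_def)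
    have "norm (stft_kernel \<Phi> g \<sigma> t Z) \<le> norm (G t)" for t
      using G(2)[of t] by simp
    then show "AE t in lebesgue. norm (stft_kernel \<Phi> g \<sigma> t Z) \<le> norm (G t)" by simp
  qed
qed

lemma entire_vec_stft_ext:
  fixes \<Phi> :: "complex^'d::finite \<Rightarrow> complex"
  assumes a: "\<And>j. 0 < a $ j" and b: "\<And>j. 0 < b $ j" and \<Phi>: "\<Phi> \<in> O_ab a b" and g: "g \<in> L2"
  shows "entire_vec (stft_ext \<Phi> g \<sigma>)"
proof -
  have ent: "entire_vec \<Phi>" using \<Phi> by (simp add: O_ab_def)
  have "entire_vec (\<lambda>Z. \<integral>t. stft_kernel \<Phi> g \<sigma> t Z \<partial>lebesgue)"
    using g by (intro entire_vec_integral entire_vec_stft_kernel[OF ent] borel_measurable_stft_kernel[OF _ ent]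
        stft_kernel_dominated[OF a b \<Phi> g]) (simp add: L2_def)
  then show ?thesis by (simp add: stft_ext_def[abs_def])
qed

lemma nn_integral_exp_majorant_power2:
  fixes a b x y \<eta> \<sigma> :: real
  assumes a: "0 < a"
  shows "(\<integral>\<^sup>+s. ennreal ((exp (- a * (s - x)\<^sup>2 + b * y\<^sup>2 - 2 * pi * \<sigma> * \<eta> * s))\<^sup>2) \<partial>lborel)
    = ennreal (sqrt (pi / (2 * a)) * (exp (b * y\<^sup>2 + pi\<^sup>2 * \<sigma>\<^sup>2 * \<eta>\<^sup>2 / a - 2 * pi * \<sigma> * \<eta> * x))\<^sup>2)"
proof -
  define \<beta> where "\<beta> = - 4 * pi * \<sigma> * \<eta>"
  have "(exp (- a * (s - x)\<^sup>2 + b * y\<^sup>2 - 2 * pi * \<sigma> * \<eta> * s))\<^sup>2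
      = exp (2 * b * y\<^sup>2) * exp (- (2 * a) * (s - x)\<^sup>2 + \<beta> * s)" for s
    by (simp add: \<beta>_def exp_double[symmetric] exp_add[symmetric] algebra_simps)
  then have "(\<integral>\<^sup>+s. ennreal ((exp (- a * (s - x)\<^sup>2 + b * y\<^sup>2 - 2 * pi * \<sigma> * \<eta> * s))\<^sup>2) \<partial>lborel)
      = (\<integral>\<^sup>+s. ennreal (exp (2 * b * y\<^sup>2)) * ennreal (exp (- (2 * a) * (s - x)\<^sup>2 + \<beta> * s)) \<partial>lborel)"
    by (simp only: ennreal_mult exp_ge_zero)
  also have "\<dots> = ennreal (exp (2 * b * y\<^sup>2)) * (\<integral>\<^sup>+s. ennreal (exp (- (2 * a) * (s - x)\<^sup>2 + \<beta> * s)) \<partial>lborel)"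
    by (rule nn_integral_cmult) simp
  also have "\<dots> = ennreal (exp (2 * b * y\<^sup>2)) * ennreal (sqrt (pi / (2 * a)) * exp (\<beta> * x + \<beta>\<^sup>2 / (4 * (2 * a))))"
    using a by (subst nn_integral_gaussian) simp_all
  also have "\<dots> = ennreal (exp (2 * b * y\<^sup>2) * (sqrt (pi / (2 * a)) * exp (\<beta> * x + \<beta>\<^sup>2 / (4 * (2 * a)))))"
    by (rule ennreal_mult[symmetric]) (use a in auto)
  also have "2 * b * y\<^sup>2 + (\<beta> * x + \<beta>\<^sup>2 / (4 * (2 * a))) = 2 * (b * y\<^sup>2 + pi\<^sup>2 * \<sigma>\<^sup>2 * \<eta>\<^sup>2 / a - 2 * pi * \<sigma> * \<eta> * x)"
    using a by (simp add: \<beta>_def power2_eq_square field_simps)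
  then have "exp (2 * b * y\<^sup>2) * (sqrt (pi / (2 * a)) * exp (\<beta> * x + \<beta>\<^sup>2 / (4 * (2 * a))))
      = sqrt (pi / (2 * a)) * (exp (b * y\<^sup>2 + pi\<^sup>2 * \<sigma>\<^sup>2 * \<eta>\<^sup>2 / a - 2 * pi * \<sigma> * \<eta> * x))\<^sup>2"
    by (simp add: exp_double[symmetric] exp_add[symmetric])
  finally show ?thesis .
qed

lemma nn_integral_kernel_majorant_power2:
  fixes a b x :: "real^'d::finite" and y \<eta> :: "'d \<Rightarrow> real" and \<sigma> :: real
  assumes a: "\<And>j. 0 < a $ j"
  defines "Q t \<equiv> \<Prod>j\<in>UNIV. exp (- a $ j * (t $ j - x $ j)\<^sup>2 + b $ j * (y j)\<^sup>2 - 2 * pi * \<sigma> * \<eta> j * t $ j)"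
  shows "(\<integral>\<^sup>+t. ennreal ((Q t)\<^sup>2) \<partial>lebesgue) = ennreal ((\<Prod>j\<in>UNIV. sqrt (pi / (2 * a $ j))) *
      (\<Prod>j\<in>UNIV. exp (b $ j * (y j)\<^sup>2 + pi\<^sup>2 * \<sigma>\<^sup>2 * (\<eta> j)\<^sup>2 / a $ j - 2 * pi * \<sigma> * \<eta> j * x $ j))\<^sup>2)"
proof -
  have "(\<integral>\<^sup>+t. ennreal ((Q t)\<^sup>2) \<partial>lebesgue) = (\<integral>\<^sup>+t. (\<Prod>j\<in>UNIV.
      ennreal ((exp (- a $ j * (t $ j - x $ j)\<^sup>2 + b $ j * (y j)\<^sup>2 - 2 * pi * \<sigma> * \<eta> j * t $ j))\<^sup>2)) \<partial>lborel)"
    by (simp add: Q_def nn_integral_completion prod_power_distrib prod_ennreal)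
  also have "\<dots> = (\<Prod>j\<in>UNIV. \<integral>\<^sup>+s.
      ennreal ((exp (- a $ j * (s - x $ j)\<^sup>2 + b $ j * (y j)\<^sup>2 - 2 * pi * \<sigma> * \<eta> j * s))\<^sup>2) \<partial>lborel)"
    by (rule nn_integral_prod_real_vec[of "\<lambda>j s. ennreal ((exp (- a $ j * (s - x $ j)\<^sup>2
        + b $ j * (y j)\<^sup>2 - 2 * pi * \<sigma> * \<eta> j * s))\<^sup>2)"]) measurable
  also have "\<dots> = (\<Prod>j\<in>UNIV. ennreal (sqrt (pi / (2 * a $ j)) *
      (exp (b $ j * (y j)\<^sup>2 + pi\<^sup>2 * \<sigma>\<^sup>2 * (\<eta> j)\<^sup>2 / a $ j - 2 * pi * \<sigma> * \<eta> j * x $ j))\<^sup>2))"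
    using a by (simp only: nn_integral_exp_majorant_power2)
  also have "\<dots> = ennreal ((\<Prod>j\<in>UNIV. sqrt (pi / (2 * a $ j))) *
      (\<Prod>j\<in>UNIV. exp (b $ j * (y j)\<^sup>2 + pi\<^sup>2 * \<sigma>\<^sup>2 * (\<eta> j)\<^sup>2 / a $ j - 2 * pi * \<sigma> * \<eta> j * x $ j))\<^sup>2)"
    using a by (simp add: prod_ennreal prod.distrib prod_power_distrib less_imp_le)
  finally show ?thesis .
qed

definition stft_growth_exponent :: "real^'d \<Rightarrow> real^'d \<Rightarrow> real \<Rightarrow> complex^('d + 'd) \<Rightarrow> 'd \<Rightarrow> real" where
  "stft_growth_exponent a b \<sigma> Z j = b $ j * (Im (Z $ Inl j))\<^sup>2 + pi\<^sup>2 * \<sigma>\<^sup>2 * (Im (Z $ Inr j))\<^sup>2 / a $ j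
     - 2 * pi * \<sigma> * Im (Z $ Inr j) * Re (Z $ Inl j)"

lemma stft_ext_norm_le:
  fixes \<Phi> :: "complex^'d::finite \<Rightarrow> complex"
  assumes a: "\<And>j. 0 < a $ j" and b: "\<And>j. 0 < b $ j" and \<Phi>: "\<Phi> \<in> O_ab a b" and g: "g \<in> L2"
  shows "\<exists>K\<ge>0. \<forall>Z. norm (stft_ext \<Phi> g \<sigma> Z) \<le> K * (\<Prod>j\<in>UNIV. exp (stft_growth_exponent a b \<sigma> Z j))"
proof -
  obtain C where C: "C > 0" "\<And>t W. norm (stft_kernel \<Phi> g \<sigma> t W) \<le> C * norm (g t) *
      (\<Prod>j\<in>UNIV. exp (- a $ j * (t $ j - Re (W $ Inl j))\<^sup>2 + b $ j * (Im (W $ Inl j))\<^sup>2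
                       - 2 * pi * \<sigma> * Im (W $ Inr j) * t $ j))"
    using stft_kernel_norm_le[OF \<Phi>, of g \<sigma>] by blast
  have g_meas: "g \<in> borel_measurable lebesgue" and g_int: "integrable lebesgue (\<lambda>t. (norm (g t))\<^sup>2)"
    using g by (simp_all add: L2_def)
  define N where "N = (\<integral>t. (norm (g t))\<^sup>2 \<partial>lebesgue)"
  define P where "P = (\<Prod>j\<in>UNIV. sqrt (pi / (2 * a $ j)))"
  have N0: "0 \<le> N" unfolding N_def by (rule Bochner_Integration.integral_nonneg) simp
  have P0: "0 \<le> P" unfolding P_def using a by (intro prod_nonneg) (simp add: less_imp_le)
  have "norm (stft_ext \<Phi> g \<sigma> Z) \<le> C * sqrt (N * P) * (\<Prod>j\<in>UNIV. exp (stft_growth_exponent a b \<sigma> Z j))" for Z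
  proof -
    define x where "x = (\<chi> j. Re (Z $ Inl j))"
    define Q where "Q t = (\<Prod>j\<in>UNIV. exp (- a $ j * (t $ j - x $ j)\<^sup>2 + b $ j * (Im (Z $ Inl j))\<^sup>2
        - 2 * pi * \<sigma> * Im (Z $ Inr j) * t $ j))" for t :: "real^'d"
    define E where "E = (\<Prod>j\<in>UNIV. exp (b $ j * (Im (Z $ Inl j))\<^sup>2
        + pi\<^sup>2 * \<sigma>\<^sup>2 * (Im (Z $ Inr j))\<^sup>2 / a $ j - 2 * pi * \<sigma> * Im (Z $ Inr j) * x $ j))"
    have [measurable]: "Q \<in> borel_measurable lebesgue"
      unfolding Q_def[abs_def]
      by (intro continuous_on_imp_lebesgue_measurable continuous_intros linear_continuous_on bounded_linear_vec_nth)
    have "(\<lambda>t. ennreal ((Q t)\<^sup>2)) \<in> borel_measurable lebesgue" by measurable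
    then have "(\<integral>\<^sup>+t. ennreal ((C * Q t)\<^sup>2) \<partial>lebesgue) = ennreal (C\<^sup>2) * (\<integral>\<^sup>+t. ennreal ((Q t)\<^sup>2) \<partial>lebesgue)"
      by (simp add: power_mult_distrib ennreal_mult nn_integral_cmult)
    also have "(\<integral>\<^sup>+t. ennreal ((Q t)\<^sup>2) \<partial>lebesgue) = ennreal (P * E\<^sup>2)"
      unfolding Q_def P_def E_def by (rule nn_integral_kernel_majorant_power2[OF a])
    finally have Q2: "(\<integral>\<^sup>+t. ennreal ((C * Q t)\<^sup>2) \<partial>lebesgue) = ennreal (C\<^sup>2 * (P * E\<^sup>2))"
      using P0 by (simp add: ennreal_mult)
    have "norm (stft_ext \<Phi> g \<sigma> Z) \<le> sqrt (N * (C\<^sup>2 * (P * E\<^sup>2)))"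
      unfolding stft_ext_def N_def
    proof (rule norm_integral_le_Cauchy_Schwarz[OF integrable_stft_kernel[OF a b \<Phi> g] g_meas _ g_int Q2])
      show "(\<lambda>t. C * Q t) \<in> borel_measurable lebesgue" by measurable
      show "0 \<le> C * Q t" for t using C(1) by (simp add: Q_def prod_nonneg)
      show "norm (stft_kernel \<Phi> g \<sigma> t Z) \<le> norm (g t) * (C * Q t)" for t
        using C(2)[of t Z] by (simp add: Q_def x_def mult_ac)
    qed (use P0 in simp)
    also have "\<dots> = C * sqrt (N * P) * E"
      using C(1) by (simp add: real_sqrt_mult E_def prod_nonneg mult_ac)
    finally show ?thesis by (simp add: E_def x_def stft_growth_exponent_def)
  qed
  moreover have "0 \<le> C * sqrt (N * P)" using C(1) N0 P0 by simp
  ultimately show ?thesis by blast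
qed

definition schwarz_reflect :: "(complex^'d \<Rightarrow> complex) \<Rightarrow> complex^'d \<Rightarrow> complex" where
  "schwarz_reflect \<Phi> u = cnj (\<Phi> (\<chi> j. cnj (u $ j)))"

lemma schwarz_reflect_O_ab:
  fixes \<Phi> :: "complex^'d::finite \<Rightarrow> complex"
  assumes "\<Phi> \<in> O_ab a b"
  shows "schwarz_reflect \<Phi> \<in> O_ab a b"
proof -
  obtain L where L: "\<And>z. (\<Phi> has_derivative L z) (at z)" "\<And>z c v. L z (\<chi> k. c * v $ k) = c * L z v"
    using entire_vecE assms unfolding O_ab_def by blast
  obtain C where C: "C > 0"
    "\<And>x y. norm (\<Phi> (cplx_pt x y)) \<le> C * (\<Prod>j\<in>UNIV. exp (- a $ j * (x $ j)\<^sup>2) * exp (b $ j * (y $ j)\<^sup>2))"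
    using assms unfolding O_ab_def by blast
  define cv where "cv u = (\<chi> j. cnj (u $ j))" for u :: "complex^'d"
  have cv: "bounded_linear cv"
    unfolding cv_def linear_conv_bounded_linear[symmetric] by (rule linearI) (simp_all add: vec_eq_iff)
  have "entire_vec (schwarz_reflect \<Phi>)"
  proof (rule entire_vecI)
    fix z
    have "((\<lambda>z. \<Phi> (cv z)) has_derivative (\<lambda>v. L (cv z) (cv v))) (at z)"
      by (rule has_derivative_compose[OF bounded_linear_imp_has_derivative[OF cv] L(1)])
    from bounded_linear.has_derivative[OF bounded_linear_cnj this]
    show "(schwarz_reflect \<Phi> has_derivative (\<lambda>v. cnj (L (cv z) (cv v)))) (at z)"
      by (simp add: schwarz_reflect_def[abs_def] cv_def)
  next
    fix z c v
    have "cv (\<chi> k. c * v $ k) = (\<chi> k. cnj c * cv v $ k)" by (simp add: cv_def vec_eq_iff)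
    then show "cnj (L (cv z) (cv (\<chi> k. c * v $ k))) = c * cnj (L (cv z) (cv v))"
      by (simp add: L(2))
  qed
  moreover have "norm (schwarz_reflect \<Phi> (cplx_pt x y))
      \<le> C * (\<Prod>j\<in>UNIV. exp (- a $ j * (x $ j)\<^sup>2) * exp (b $ j * (y $ j)\<^sup>2))" for x y
  proof -
    have "(\<chi> j. cnj (cplx_pt x y $ j)) = cplx_pt x (- y)"
      by (simp add: cplx_pt_def vec_eq_iff complex_eq_iff)
    then show ?thesis using C(2)[of x "- y"] by (simp add: schwarz_reflect_def)
  qed
  ultimately show ?thesis using C(1) unfolding O_ab_def by blast
qed

lemma cnj_L2:
  assumes "f \<in> L2" shows "(\<lambda>t. cnj (f t)) \<in> L2"
proof -
  have "cnj \<in> borel_measurable borel" by (intro borel_measurable_continuous_onI continuous_intros)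
  with assms show ?thesis by (auto simp: L2_def intro: measurable_compose)
qed

lemma stft_ext_schwarz_reflect_pair_pt:
  fixes \<phi> :: "complex^'d::finite \<Rightarrow> complex"
  shows "stft_ext (schwarz_reflect \<phi>) f (- 1) (pair_pt x \<omega>) = stft (restr_R \<phi>) f x \<omega>"
  unfolding stft_ext_def stft_def
proof (rule Bochner_Integration.integral_cong[OF refl])
  fix t :: "real^'d"
  have "\<i> * complex_of_real (2 * pi * - 1) * (\<Sum>j\<in>UNIV. pair_pt x \<omega> $ Inr j * complex_of_real (t $ j))
      = \<i> * complex_of_real (- 2 * pi * (\<omega> \<bullet> t))"
    by (simp add: pair_pt_def inner_vec_def)
  then show "stft_kernel (schwarz_reflect \<phi>) f (- 1) t (pair_pt x \<omega>)
      = f t * cnj (restr_R \<phi> (t - x)) * cis (- 2 * pi * (\<omega> \<bullet> t))"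
    by (simp add: stft_kernel_def schwarz_reflect_def restr_R_def pair_pt_def cis_conv_exp mult.assoc)
qed

lemma stft_ext_cnj_pair_pt:
  fixes \<phi> :: "complex^'d::finite \<Rightarrow> complex"
  shows "stft_ext \<phi> (\<lambda>t. cnj (f t)) 1 (pair_pt x \<omega>) = cnj (stft (restr_R \<phi>) f x \<omega>)"
  unfolding stft_ext_def stft_def Bochner_Integration.integral_cnj[symmetric]
proof (rule Bochner_Integration.integral_cong[OF refl])
  fix t :: "real^'d"
  have "(\<chi> j. complex_of_real (t $ j) - pair_pt x \<omega> $ Inl j) = (\<chi> j. complex_of_real ((t - x) $ j))"
    by (simp add: vec_eq_iff pair_pt_def)
  moreover have "exp (\<i> * complex_of_real (2 * pi * 1) * (\<Sum>j\<in>UNIV. pair_pt x \<omega> $ Inr j * complex_of_real (t $ j)))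
      = cnj (cis (- 2 * pi * (\<omega> \<bullet> t)))"
  proof -
    have "\<i> * complex_of_real (2 * pi * 1) * (\<Sum>j\<in>UNIV. pair_pt x \<omega> $ Inr j * complex_of_real (t $ j))
        = \<i> * complex_of_real (- (- 2 * pi * (\<omega> \<bullet> t)))"
      by (simp add: pair_pt_def inner_vec_def)
    then show ?thesis by (simp only: cis_cnj) (simp add: cis_conv_exp mult.assoc)
  qed
  ultimately show "stft_kernel \<phi> (\<lambda>t. cnj (f t)) 1 t (pair_pt x \<omega>)
      = cnj (f t * cnj (restr_R \<phi> (t - x)) * cis (- 2 * pi * (\<omega> \<bullet> t)))"
    by (simp add: stft_kernel_def restr_R_def)
qed

lemma prod_exp_Im_le_O_c_weight:
  fixes a b :: "real^'d::finite" and Z :: "complex^('d + 'd)"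
  assumes a: "\<And>j. 0 < a $ j" and b: "\<And>j. 0 \<le> b $ j"
  shows "(\<Prod>j\<in>UNIV. exp (2 * b $ j * (Im (Z $ Inl j))\<^sup>2 + 2 * pi\<^sup>2 * (Im (Z $ Inr j))\<^sup>2 / a $ j))
    \<le> (\<Prod>k\<in>UNIV. exp ((\<chi> k. case k of Inl j \<Rightarrow> 2 * b $ j | Inr j \<Rightarrow> 2 * pi\<^sup>2 / a $ j) $ k * (norm (Z $ k))\<^sup>2))"
proof -
  have Im_le: "(Im z)\<^sup>2 \<le> (norm z)\<^sup>2" for z
  proof -
    have "\<bar>Im z\<bar>\<^sup>2 \<le> (norm z)\<^sup>2" by (intro power_mono abs_Im_le_cmod) auto
    then show ?thesis by simp
  qed
  have "(\<Prod>j\<in>UNIV. exp (2 * b $ j * (Im (Z $ Inl j))\<^sup>2 + 2 * pi\<^sup>2 * (Im (Z $ Inr j))\<^sup>2 / a $ j))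
      \<le> (\<Prod>j\<in>UNIV. exp (2 * b $ j * (norm (Z $ Inl j))\<^sup>2) * exp (2 * pi\<^sup>2 / a $ j * (norm (Z $ Inr j))\<^sup>2))"
  proof (rule prod_mono, safe)
    fix j
    have "2 * b $ j * (Im (Z $ Inl j))\<^sup>2 \<le> 2 * b $ j * (norm (Z $ Inl j))\<^sup>2"
      using b[of j] Im_le by (intro mult_left_mono) auto
    moreover have "2 * pi\<^sup>2 * (Im (Z $ Inr j))\<^sup>2 / a $ j \<le> 2 * pi\<^sup>2 / a $ j * (norm (Z $ Inr j))\<^sup>2"
      using a[of j] Im_le by (simp add: divide_right_mono)
    ultimately show "exp (2 * b $ j * (Im (Z $ Inl j))\<^sup>2 + 2 * pi\<^sup>2 * (Im (Z $ Inr j))\<^sup>2 / a $ j)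
        \<le> exp (2 * b $ j * (norm (Z $ Inl j))\<^sup>2) * exp (2 * pi\<^sup>2 / a $ j * (norm (Z $ Inr j))\<^sup>2)"
      by (simp add: exp_add[symmetric])
  qed simp
  also have "\<dots> = (\<Prod>k\<in>UNIV. exp ((\<chi> k. case k of Inl j \<Rightarrow> 2 * b $ j | Inr j \<Rightarrow> 2 * pi\<^sup>2 / a $ j) $ k * (norm (Z $ k))\<^sup>2))"
    by (simp add: UNIV_Plus_UNIV[symmetric] prod.Plus prod.distrib comp_def del: UNIV_Plus_UNIV)
  finally show ?thesis .
qed

lemma stft_growth_exponent_opposite_sum:
  "stft_growth_exponent a b (- 1) Z j + stft_growth_exponent a b 1 Z j
    = 2 * b $ j * (Im (Z $ Inl j))\<^sup>2 + 2 * pi\<^sup>2 * (Im (Z $ Inr j))\<^sup>2 / a $ j"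
  by (simp add: stft_growth_exponent_def algebra_simps add_divide_distrib)

lemma stft_ext_mult_O_c:
  fixes \<Phi>\<^sub>1 \<Phi>\<^sub>2 :: "complex^'d::finite \<Rightarrow> complex"
  assumes a: "\<And>j. 0 < a $ j" and b: "\<And>j. 0 < b $ j"
    and \<Phi>: "\<Phi>\<^sub>1 \<in> O_ab a b" "\<Phi>\<^sub>2 \<in> O_ab a b" and g: "g\<^sub>1 \<in> L2" "g\<^sub>2 \<in> L2"
  shows "(\<lambda>Z. stft_ext \<Phi>\<^sub>1 g\<^sub>1 (- 1) Z * stft_ext \<Phi>\<^sub>2 g\<^sub>2 1 Z)
    \<in> O_c (\<chi> k. case k of Inl j \<Rightarrow> 2 * b $ j | Inr j \<Rightarrow> 2 * pi\<^sup>2 / a $ j)"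
proof -
  obtain K\<^sub>1 where K\<^sub>1: "K\<^sub>1 \<ge> 0"
    "\<And>Z. norm (stft_ext \<Phi>\<^sub>1 g\<^sub>1 (- 1) Z) \<le> K\<^sub>1 * (\<Prod>j\<in>UNIV. exp (stft_growth_exponent a b (- 1) Z j))"
    using stft_ext_norm_le[OF a b \<Phi>(1) g(1)] by blast
  obtain K\<^sub>2 where K\<^sub>2: "K\<^sub>2 \<ge> 0"
    "\<And>Z. norm (stft_ext \<Phi>\<^sub>2 g\<^sub>2 1 Z) \<le> K\<^sub>2 * (\<Prod>j\<in>UNIV. exp (stft_growth_exponent a b 1 Z j))"
    using stft_ext_norm_le[OF a b \<Phi>(2) g(2)] by blast
  have "norm (stft_ext \<Phi>\<^sub>1 g\<^sub>1 (- 1) Z * stft_ext \<Phi>\<^sub>2 g\<^sub>2 1 Z)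
      \<le> (K\<^sub>1 * K\<^sub>2 + 1) * (\<Prod>k\<in>UNIV. exp ((\<chi> k. case k of Inl j \<Rightarrow> 2 * b $ j | Inr j \<Rightarrow> 2 * pi\<^sup>2 / a $ j) $ k * (norm (Z $ k))\<^sup>2))"
    for Z
  proof -
    have "norm (stft_ext \<Phi>\<^sub>1 g\<^sub>1 (- 1) Z * stft_ext \<Phi>\<^sub>2 g\<^sub>2 1 Z)
        \<le> (K\<^sub>1 * (\<Prod>j\<in>UNIV. exp (stft_growth_exponent a b (- 1) Z j))) *
          (K\<^sub>2 * (\<Prod>j\<in>UNIV. exp (stft_growth_exponent a b 1 Z j)))"
      unfolding norm_mult using K\<^sub>1 K\<^sub>2 by (intro mult_mono) (auto intro!: mult_nonneg_nonneg prod_nonneg)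
    also have "\<dots> = K\<^sub>1 * K\<^sub>2 *
        (\<Prod>j\<in>UNIV. exp (stft_growth_exponent a b (- 1) Z j + stft_growth_exponent a b 1 Z j))"
      by (simp add: exp_add prod.distrib mult_ac)
    also have "\<dots> = K\<^sub>1 * K\<^sub>2 *
        (\<Prod>j\<in>UNIV. exp (2 * b $ j * (Im (Z $ Inl j))\<^sup>2 + 2 * pi\<^sup>2 * (Im (Z $ Inr j))\<^sup>2 / a $ j))"
      by (simp only: stft_growth_exponent_opposite_sum)
    also have "\<dots> \<le> (K\<^sub>1 * K\<^sub>2 + 1) *
        (\<Prod>k\<in>UNIV. exp ((\<chi> k. case k of Inl j \<Rightarrow> 2 * b $ j | Inr j \<Rightarrow> 2 * pi\<^sup>2 / a $ j) $ k * (norm (Z $ k))\<^sup>2))"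
      using K\<^sub>1(1) K\<^sub>2(1) a b
      by (intro mult_mono prod_exp_Im_le_O_c_weight) (auto simp: less_imp_le intro: prod_nonneg)
    finally show ?thesis .
  qed
  moreover have "0 < K\<^sub>1 * K\<^sub>2 + 1" using K\<^sub>1(1) K\<^sub>2(1) by (simp add: add_nonneg_pos)
  moreover have "entire_vec (\<lambda>Z. stft_ext \<Phi>\<^sub>1 g\<^sub>1 (- 1) Z * stft_ext \<Phi>\<^sub>2 g\<^sub>2 1 Z)"
    by (intro entire_vec_mult entire_vec_stft_ext[OF a b \<Phi>(1) g(1)] entire_vec_stft_ext[OF a b \<Phi>(2) g(2)])
  ultimately show ?thesis unfolding O_c_def by blast
qed

theorem lemma3p4:
  fixes a b :: "real ^ 'd" and \<phi> :: "complex ^ 'd \<Rightarrow> complex"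
  assumes "\<forall>j. a $ j > 0" and "\<forall>j. b $ j > 0"
    and "\<phi> \<in> O_ab a b"
  shows "\<forall>f \<in> L2. \<exists>F \<in> O_c (\<chi> k. case k of Inl j \<Rightarrow> 2 * b $ j
                                          | Inr j \<Rightarrow> 2 * pi\<^sup>2 / a $ j).
           \<forall>x \<omega>. F (pair_pt x \<omega>) = complex_of_real ((norm (stft (restr_R \<phi>) f x \<omega>))\<^sup>2)"
proof
  fix f :: "real^'d \<Rightarrow> complex" assume f: "f \<in> L2"
  let ?F = "\<lambda>Z. stft_ext (schwarz_reflect \<phi>) f (- 1) Z * stft_ext \<phi> (\<lambda>t. cnj (f t)) 1 Z"
  have "?F \<in> O_c (\<chi> k. case k of Inl j \<Rightarrow> 2 * b $ j | Inr j \<Rightarrow> 2 * pi\<^sup>2 / a $ j)"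
    using assms by (intro stft_ext_mult_O_c schwarz_reflect_O_ab f cnj_L2) auto
  moreover have "?F (pair_pt x \<omega>) = complex_of_real ((norm (stft (restr_R \<phi>) f x \<omega>))\<^sup>2)" for x \<omega>
    by (simp only: stft_ext_schwarz_reflect_pair_pt stft_ext_cnj_pair_pt complex_norm_square)
  ultimately show "\<exists>F \<in> O_c (\<chi> k. case k of Inl j \<Rightarrow> 2 * b $ j | Inr j \<Rightarrow> 2 * pi\<^sup>2 / a $ j).
      \<forall>x \<omega>. F (pair_pt x \<omega>) = complex_of_real ((norm (stft (restr_R \<phi>) f x \<omega>))\<^sup>2)"
    by (intro bexI[of _ ?F]) auto
qed

end
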